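(* Let a countable group $G$ act on a set $X$, let $\Phi=(\ell,\phi,\mathcal{Z},\Gamma,\mathcal{H})$ be a chart for $G$, let $0<\epsilon<1/16$, let $q$ satisfy $6\epsilon<q<1/2$, and let $A\subseteq\mathbb{Z}^\ell\times\Gamma$ be a centered rectangle. Suppose $E$ is a $(\Phi,A,\epsilon)$-sub-rectangular equivalence relation on $X$. Let $x\in X^{\mathcal{H}}$ and $1\le i\le\ell$. If $y_1,\dots,y_t\in\partial_i^\Phi(E,q\cdot A)\cap\phi(2^{17\ell}\cdot A)\cdot x$ satisfy $$\phi\big(2^{19\ell}\cdot A^i+5q\cdot A\big)\cdot y_r\cap\phi\big(2^{19\ell}\cdot A^i+5q\cdot A\big)\cdot y_s=\varnothing$$ for all $r\ne s$, then $t\le 2^{22\ell^2}$.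
   Context: Rectangles: Let $\Gamma$ be a finite additive abelian group with identity $0_\Gamma$ and $\ell\in\mathbb{N}$. Elements $v$ of $\mathbb{R}^\ell\times\Gamma$ have coordinates $v_1,\dots,v_\ell\in\mathbb{R}$, $v_{\ell+1}\in\Gamma$; $\mathbf{0}$ has first $\ell$ coordinates $0$, last $0_\Gamma$; $e_i$ has $i$-th coordinate $1$, other real coordinates $0$, last $0_\Gamma$; $\lambda\cdot v=(\lambda v_1,\dots,\lambda v_\ell,v_{\ell+1})$. $\mathrm{Rec}(a)=\{b\in\mathbb{Z}^\ell\times\Gamma: -|a_i|\le b_i\le|a_i|,\ 1\le i\le\ell\}$. A rectangle is $c+\mathrm{Rec}(a)$ with $c,a\in\mathbb{Z}^\ell\times\Gamma$; uniquely written with center $c\in\mathbb{Z}^\ell\times\{0_\Gamma\}$ and radius vector $\mathrm{L}(A)=a\in\mathbb{N}^\ell\times\{0_\Gamma\}$, entries $\mathrm{L}_i(A)$. Centered means center $\mathbf{0}$. $A\sqsubseteq B$ means $\mathrm{L}_i(A)\le\mathrm{L}_i(B)$ for all $i$. For $\lambda>0$, $\lambda\cdot A=c+\mathrm{Rec}(\lambda\cdot\mathrm{L}(A))$ ($c$ the center of $A$). $A^i=c+\mathrm{Rec}(\mathrm{L}(A)-\mathrm{L}_i(A)\cdot e_i)$, and $\lambda\cdot A^i$ means $\lambda\cdot(A^i)$. Sums are elementwise. Charts: a chart for $G$ is $\Phi=(\ell,\phi,\mathcal{Z},\Gamma,\mathcal{H})$ with $\mathcal{H}$ a finite collection of pairwise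 conjugate subgroups of $G$, $\Gamma$ finite abelian, $\mathcal{Z}$ a centered rectangle with all $\mathrm{L}_i(\mathcal{Z})>0$, $\phi$ an injective map into $G$ with $\mathrm{dom}(\phi)$ a centered rectangle containing $3\cdot\mathcal{Z}$, $\phi(\mathbf{0})=1_G$, and for all $r,s\in\mathrm{dom}(\phi)$, $H\in\mathcal{H}$: $\phi(r)H=\phi(s)H\Rightarrow r=s$; $r+s+\mathcal{Z}\subseteq\mathrm{dom}(\phi)\Rightarrow\exists z\in\mathcal{Z}:\phi(r)\phi(s)H=\phi(r+s+z)H$; $r-s+\mathcal{Z}\subseteq\mathrm{dom}(\phi)\Rightarrow\exists z:\phi(r)\phi(s)^{-1}H=\phi(r-s+z)H$; $-r+s+\mathcal{Z}\subseteq\mathrm{dom}(\phi)\Rightarrow\exists z:\phi(r)^{-1}\phi(s)H=\phi(-r+s+z)H$; $-s+\mathcal{Z}\subseteq\mathrm{dom}(\phi)\Rightarrow\exists z:\phi(s)^{-1}H=\phi(-s+z)H$. $\phi(S)\cdot x=\{\phi(s)\cdot x:s\in S\}$; $X^{\mathcal{H}}=\{x\in X:\mathrm{Stab}(x)\in\mathcal{H}\}$. Rough rectangles: for a rectangle $B$ with $2\cdot B\subseteq\mathrm{dom}(\phi)$, $x\in X^{\mathcal{H}}$, $0<\delta<1$, $R\subseteq X$ is $(\Phi,\delta)$-roughly $B$ at $x$ if $2\cdot\mathcal{Z}\sqsubseteq\delta\cdot B$ and $\phi((1-\delta)\cdot B)\cdot x\subseteq R\subseteq\phi((1+\delta)\cdot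 B)\cdot x$. Rectangular: for $A$ centered and $0<\epsilon<1$, an equivalence relation $F$ is $(\Phi,A,\epsilon)$-rectangular if every $F$-class not meeting $X^{\mathcal{H}}$ is a singleton and every $F$-class $U$ meeting $X^{\mathcal{H}}$ is $(\Phi,\delta)$-roughly $B$ at some point of $X^{\mathcal{H}}$ for some $\delta>0$ and rectangle $B$ with $A\sqsubseteq B$, $2^{22\ell}\cdot B\subseteq\mathrm{dom}(\phi)$, $2\delta\cdot B\sqsubseteq\epsilon\cdot A$. $E$ is $(\Phi,A,\epsilon)$-sub-rectangular if it contains a $(\Phi,A,\epsilon)$-rectangular sub-equivalence relation. Boundary: for $A'\subseteq\mathrm{dom}(\phi)$ centered and $1\le i\le\ell$, $\partial_i^\Phi(E,A')$ is the set of $x\in X^{\mathcal{H}}$ with $[\phi(A'^i-\mathrm{L}_i(A')\cdot e_i)\cdot x]_E\cap[\phi(A'^i+\mathrm{L}_i(A')\cdot e_i)\cdot x]_E=\varnothing$, $[Y]_E$ denoting $E$-saturation. *)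

theory Defs
  imports "HOL-Algebra.Group_Action" "HOL-Algebra.Coset" "HOL-Library.Countable_Set" Complex_Main
begin

(* Points of Z^l x Gamma: the integer coordinates are  fst v 1, ..., fst v l
   (all other integer coordinates are required to be 0), the Gamma coordinate is  snd v. *)
type_synonym 'c pt = "(nat \<Rightarrow> int) \<times> 'c"

definition valid_pt :: "nat \<Rightarrow> 'c pt \<Rightarrow> bool" where
  "valid_pt l v \<longleftrightarrow> (\<forall>j. j \<notin> {1..l} \<longrightarrow> fst v j = 0)"

definition padd :: "'c::ab_group_add pt \<Rightarrow> 'c pt \<Rightarrow> 'c pt" where
  "padd v w = ((\<lambda>j. fst v j + fst w j), snd v + snd w)"

definition pminus :: "'c::ab_group_add pt \<Rightarrow> 'c pt \<Rightarrow> 'c pt" where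
  "pminus v w = ((\<lambda>j. fst v j - fst w j), snd v - snd w)"

definition pneg :: "'c::ab_group_add pt \<Rightarrow> 'c pt" where
  "pneg v = ((\<lambda>j. - fst v j), - snd v)"

definition pzero :: "'c::ab_group_add pt" where
  "pzero = ((\<lambda>j. 0), 0)"

definition pe :: "nat \<Rightarrow> int \<Rightarrow> 'c::ab_group_add pt" where
  "pe i k = ((\<lambda>j. if j = i then k else 0), 0)"

definition Rec :: "nat \<Rightarrow> (nat \<Rightarrow> real) \<Rightarrow> 'c::ab_group_add pt set" where
  "Rec l a = {b. valid_pt l b \<and> (\<forall>i\<in>{1..l}. \<bar>real_of_int (fst b i)\<bar> \<le> \<bar>a i\<bar>)}"

definition ptrans :: "'c::ab_group_add pt \<Rightarrow> 'c pt set \<Rightarrow> 'c pt set" where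
  "ptrans v S = padd v ` S"

definition psum :: "'c::ab_group_add pt set \<Rightarrow> 'c pt set \<Rightarrow> 'c pt set" where
  "psum S T = {padd s t | s t. s \<in> S \<and> t \<in> T}"

(* A rectangle is given by its center c (in Z^l x {0}) and its radius vector L (in N^l x {0}). *)
type_synonym rect = "(nat \<Rightarrow> int) \<times> (nat \<Rightarrow> nat)"

definition is_rect :: "nat \<Rightarrow> rect \<Rightarrow> bool" where
  "is_rect l R \<longleftrightarrow> (\<forall>j. j \<notin> {1..l} \<longrightarrow> fst R j = 0)"

definition centered :: "(nat \<Rightarrow> nat) \<Rightarrow> rect" where
  "centered a = ((\<lambda>j. 0), a)"

definition rset :: "nat \<Rightarrow> rect \<Rightarrow> 'c::ab_group_add pt set" where
  "rset l R = ptrans (fst R, 0) (Rec l (\<lambda>i. real (snd R i)))"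

(* lambda . R = c + Rec(lambda L(R)); as a rectangle its radius vector is floor(lambda L(R)) *)
definition rscale :: "real \<Rightarrow> rect \<Rightarrow> rect" where
  "rscale lam R = (fst R, (\<lambda>i. nat \<lfloor>lam * real (snd R i)\<rfloor>))"

definition rdrop :: "nat \<Rightarrow> rect \<Rightarrow> rect" where
  "rdrop i R = (fst R, (snd R)(i := 0))"

definition rle :: "nat \<Rightarrow> rect \<Rightarrow> rect \<Rightarrow> bool" where
  "rle l A B \<longleftrightarrow> (\<forall>i\<in>{1..l}. snd A i \<le> snd B i)"

definition act_img :: "('g \<Rightarrow> 'x \<Rightarrow> 'x) \<Rightarrow> ('c pt \<Rightarrow> 'g) \<Rightarrow> 'c pt set \<Rightarrow> 'x \<Rightarrow> 'x set" where
  "act_img act \<phi> S x = (\<lambda>s. act (\<phi> s) x) ` S"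

(* Charts Phi = (l, phi, Z, Gamma, H): Gamma is the type 'c, dom(phi) = rset l (centered D),
   Z = centered Zr. *)
definition chart ::
  "('g, 'b) monoid_scheme \<Rightarrow> nat \<Rightarrow> ('c::{finite, ab_group_add} pt \<Rightarrow> 'g)
     \<Rightarrow> (nat \<Rightarrow> nat) \<Rightarrow> (nat \<Rightarrow> nat) \<Rightarrow> 'g set set \<Rightarrow> bool" where
  "chart G l \<phi> D Zr \<H> \<longleftrightarrow>
     (let dom = (rset l (centered D) :: 'c pt set); Z = (rset l (centered Zr) :: 'c pt set) in
       finite \<H> \<and> (\<forall>H\<in>\<H>. subgroup H G) \<and>
       (\<forall>H1\<in>\<H>. \<forall>H2\<in>\<H>. \<exists>g\<in>carrier G. H2 = (g <#\<^bsub>G\<^esub> H1) #>\<^bsub>G\<^esub> inv\<^bsub>G\<^esub> g) \<and>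
       (\<forall>i\<in>{1..l}. Zr i > 0) \<and>
       rset l (rscale 3 (centered Zr)) \<subseteq> dom \<and>
       \<phi> ` dom \<subseteq> carrier G \<and> inj_on \<phi> dom \<and> \<phi> pzero = \<one>\<^bsub>G\<^esub> \<and>
       (\<forall>r\<in>dom. \<forall>s\<in>dom. \<forall>H\<in>\<H>.
          (\<phi> r <#\<^bsub>G\<^esub> H = \<phi> s <#\<^bsub>G\<^esub> H \<longrightarrow> r = s) \<and>
          (ptrans (padd r s) Z \<subseteq> dom \<longrightarrow>
             (\<exists>z\<in>Z. (\<phi> r \<otimes>\<^bsub>G\<^esub> \<phi> s) <#\<^bsub>G\<^esub> H = \<phi> (padd (padd r s) z) <#\<^bsub>G\<^esub> H)) \<and>
          (ptrans (pminus r s) Z \<subseteq> dom \<longrightarrow>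
             (\<exists>z\<in>Z. (\<phi> r \<otimes>\<^bsub>G\<^esub> inv\<^bsub>G\<^esub> \<phi> s) <#\<^bsub>G\<^esub> H = \<phi> (padd (pminus r s) z) <#\<^bsub>G\<^esub> H)) \<and>
          (ptrans (padd (pneg r) s) Z \<subseteq> dom \<longrightarrow>
             (\<exists>z\<in>Z. (inv\<^bsub>G\<^esub> \<phi> r \<otimes>\<^bsub>G\<^esub> \<phi> s) <#\<^bsub>G\<^esub> H = \<phi> (padd (padd (pneg r) s) z) <#\<^bsub>G\<^esub> H)) \<and>
          (ptrans (pneg s) Z \<subseteq> dom \<longrightarrow>
             (\<exists>z\<in>Z. inv\<^bsub>G\<^esub> \<phi> s <#\<^bsub>G\<^esub> H = \<phi> (padd (pneg s) z) <#\<^bsub>G\<^esub> H))))"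

definition XH :: "('g, 'b) monoid_scheme \<Rightarrow> ('g \<Rightarrow> 'x \<Rightarrow> 'x) \<Rightarrow> 'x set \<Rightarrow> 'g set set \<Rightarrow> 'x set" where
  "XH G act X \<H> = {x\<in>X. stabilizer G act x \<in> \<H>}"

definition roughly ::
  "('g, 'b) monoid_scheme \<Rightarrow> ('g \<Rightarrow> 'x \<Rightarrow> 'x) \<Rightarrow> 'x set \<Rightarrow> nat \<Rightarrow> ('c::{finite, ab_group_add} pt \<Rightarrow> 'g)
     \<Rightarrow> (nat \<Rightarrow> nat) \<Rightarrow> (nat \<Rightarrow> nat) \<Rightarrow> 'g set set \<Rightarrow> real \<Rightarrow> rect \<Rightarrow> 'x \<Rightarrow> 'x set \<Rightarrow> bool" where
  "roughly G act X l \<phi> D Zr \<H> \<delta> B x R \<longleftrightarrow>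
     is_rect l B \<and> (rset l (rscale 2 B) :: 'c pt set) \<subseteq> rset l (centered D) \<and>
     x \<in> XH G act X \<H> \<and> 0 < \<delta> \<and> \<delta> < 1 \<and>
     rle l (rscale 2 (centered Zr)) (rscale \<delta> B) \<and>
     act_img act \<phi> (rset l (rscale (1 - \<delta>) B)) x \<subseteq> R \<and>
     R \<subseteq> act_img act \<phi> (rset l (rscale (1 + \<delta>) B)) x"

(* F is (Phi, A, eps)-rectangular, A = centered a *)
definition rectangular ::
  "('g, 'b) monoid_scheme \<Rightarrow> ('g \<Rightarrow> 'x \<Rightarrow> 'x) \<Rightarrow> 'x set \<Rightarrow> nat \<Rightarrow> ('c::{finite, ab_group_add} pt \<Rightarrow> 'g)
     \<Rightarrow> (nat \<Rightarrow> nat) \<Rightarrow> (nat \<Rightarrow> nat) \<Rightarrow> 'g set set \<Rightarrow> (nat \<Rightarrow> nat) \<Rightarrow> real \<Rightarrow> 'x rel \<Rightarrow> bool" where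
  "rectangular G act X l \<phi> D Zr \<H> a \<epsilon> F \<longleftrightarrow>
     equiv X F \<and>
     (\<forall>U\<in>X // F. U \<inter> XH G act X \<H> = {} \<longrightarrow> (\<exists>u. U = {u})) \<and>
     (\<forall>U\<in>X // F. U \<inter> XH G act X \<H> \<noteq> {} \<longrightarrow>
        (\<exists>\<delta> B y. \<delta> > 0 \<and> is_rect l B \<and> y \<in> XH G act X \<H> \<and>
           roughly G act X l \<phi> D Zr \<H> \<delta> B y U \<and>
           rle l (centered a) B \<and>
           (rset l (rscale (2 ^ (22 * l)) B) :: 'c pt set) \<subseteq> rset l (centered D) \<and>
           rle l (rscale (2 * \<delta>) B) (rscale \<epsilon> (centered a))))"

definition sub_rectangular ::
  "('g, 'b) monoid_scheme \<Rightarrow> ('g \<Rightarrow> 'x \<Rightarrow> 'x) \<Rightarrow> 'x set \<Rightarrow> nat \<Rightarrow> ('c::{finite, ab_group_add} pt \<Rightarrow> 'g)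
     \<Rightarrow> (nat \<Rightarrow> nat) \<Rightarrow> (nat \<Rightarrow> nat) \<Rightarrow> 'g set set \<Rightarrow> (nat \<Rightarrow> nat) \<Rightarrow> real \<Rightarrow> 'x rel \<Rightarrow> bool" where
  "sub_rectangular G act X l \<phi> D Zr \<H> a \<epsilon> E \<longleftrightarrow>
     (\<exists>F \<subseteq> E. rectangular G act X l \<phi> D Zr \<H> a \<epsilon> F)"

definition boundary ::
  "('g, 'b) monoid_scheme \<Rightarrow> ('g \<Rightarrow> 'x \<Rightarrow> 'x) \<Rightarrow> 'x set \<Rightarrow> nat \<Rightarrow> ('c::{finite, ab_group_add} pt \<Rightarrow> 'g)
     \<Rightarrow> 'g set set \<Rightarrow> 'x rel \<Rightarrow> rect \<Rightarrow> nat \<Rightarrow> 'x set" where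
  "boundary G act X l \<phi> \<H> E A' i =
     {x \<in> XH G act X \<H>.
        E `` act_img act \<phi> (ptrans (pe i (- int (snd A' i))) (rset l (rdrop i A') :: 'c pt set)) x
        \<inter> E `` act_img act \<phi> (ptrans (pe i (int (snd A' i))) (rset l (rdrop i A'))) x = {}}"

end

theory Submission
  imports Defs
begin

text \<open>Fix a rectangular \<open>F \<subseteq> E\<close>. The \<open>F\<close>-class of each \<open>y\<^sub>r\<close> is roughly a rectangle \<open>B\<close>
  at some \<open>z\<close>, where \<open>B\<close> contains \<open>A\<close> and its error \<open>\<delta> B\<close> is tiny compared with \<open>\<epsilon> A\<close>.
  Since \<open>y\<^sub>r\<close> lies on the \<open>i\<close>-th boundary of \<open>E\<close> at scale \<open>q A\<close>, it lies within about
  \<open>q a\<^sub>i\<close> of one of the two \<open>i\<close>-faces of \<open>B\<close>: otherwise \<open>y\<^sub>r\<close> shifted by \<open>\<plusminus>q a\<^sub>i e\<^sub>i\<close> would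
  give two points of its own class. Moreover, every class meeting \<open>\<phi>(2\<^sup>1\<^sup>7\<^sup>\<ell> A)\<cdot>x\<close> contains a
  point \<open>\<phi>(g)\<cdot>x\<close> with \<open>g\<close> on the grid \<open>(a/4)\<int>\<^sup>\<ell>\<close> and \<open>|g\<^sub>j| \<le> (2\<^sup>1\<^sup>7\<^sup>\<ell> + 1) a\<^sub>j\<close>.
  Label \<open>y\<^sub>r\<close> by such a grid point of its class and by the face it is near. Two points with
  the same label lie in one class near the same face, so \<open>y\<^sub>s = \<phi>(w)\<cdot>y\<^sub>r\<close> with
  \<open>|w\<^sub>i| \<le> 5 q a\<^sub>i\<close> and \<open>|w\<^sub>j| \<le> 2\<^sup>1\<^sup>9\<^sup>\<ell> a\<^sub>j\<close>, contradicting disjointness. Hence \<open>t\<close> is at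
  most the number of labels, \<open>2 (10\<cdot>2\<^sup>1\<^sup>7\<^sup>\<ell> + 11)\<^sup>\<ell> \<le> 2\<^sup>2\<^sup>2\<^sup>\<ell>\<^sup>2\<close>.\<close>

lemma valid_padd [simp]: "valid_pt l v \<Longrightarrow> valid_pt l w \<Longrightarrow> valid_pt l (padd v w)"
  by (simp add: valid_pt_def padd_def)

lemma valid_pminus [simp]: "valid_pt l v \<Longrightarrow> valid_pt l w \<Longrightarrow> valid_pt l (pminus v w)"
  by (simp add: valid_pt_def pminus_def)

lemma valid_pneg [simp]: "valid_pt l v \<Longrightarrow> valid_pt l (pneg v)"
  by (simp add: valid_pt_def pneg_def)

lemma valid_pe [simp]: "i \<in> {1..l} \<Longrightarrow> valid_pt l (pe i k)"
  by (auto simp add: valid_pt_def pe_def)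

lemma fst_padd [simp]: "fst (padd v w) j = fst v j + fst w j" by (simp add: padd_def)
lemma fst_pminus [simp]: "fst (pminus v w) j = fst v j - fst w j" by (simp add: pminus_def)
lemma fst_pneg [simp]: "fst (pneg v) j = - fst v j" by (simp add: pneg_def)
lemma fst_pe [simp]: "fst (pe i k) j = (if j = i then k else 0)" by (simp add: pe_def)

lemma is_rect_centered [simp]: "is_rect l (centered a)" by (simp add: is_rect_def centered_def)
lemma fst_centered [simp]: "fst (centered a) = (\<lambda>j. 0)" by (simp add: centered_def)
lemma snd_centered [simp]: "snd (centered a) = a" by (simp add: centered_def)
lemma fst_rscale [simp]: "fst (rscale lam R) = fst R" by (simp add: rscale_def)
lemma snd_rscale [simp]: "snd (rscale lam R) j = nat \<lfloor>lam * real (snd R j)\<rfloor>" by (simp add: rscale_def)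
lemma fst_rdrop [simp]: "fst (rdrop i R) = fst R" by (simp add: rdrop_def)
lemma snd_rdrop [simp]: "snd (rdrop i R) = (snd R)(i := 0)" by (simp add: rdrop_def)
lemma is_rect_rscale [simp]: "is_rect l (rscale lam R) = is_rect l R" by (simp add: is_rect_def)
lemma is_rect_rdrop [simp]: "is_rect l (rdrop i R) = is_rect l R" by (simp add: is_rect_def)

lemma mem_rset:
  assumes "is_rect l R"
  shows "w \<in> (rset l R :: 'c::ab_group_add pt set) \<longleftrightarrow>
    valid_pt l w \<and> (\<forall>j\<in>{1..l}. \<bar>fst w j - fst R j\<bar> \<le> int (snd R j))"
proof
  assume "w \<in> rset l R"
  then obtain v where v: "v \<in> Rec l (\<lambda>i. real (snd R i))" "w = padd (fst R, 0) v"
    unfolding rset_def ptrans_def by auto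
  have "\<bar>fst w j - fst R j\<bar> \<le> int (snd R j)" if "j \<in> {1..l}" for j
  proof -
    have "\<bar>real_of_int (fst v j)\<bar> \<le> \<bar>real (snd R j)\<bar>" using v(1) that unfolding Rec_def by auto
    hence "\<bar>fst v j\<bar> \<le> int (snd R j)" by linarith
    thus ?thesis using v(2) by simp
  qed
  moreover have "valid_pt l w" using v assms unfolding Rec_def is_rect_def valid_pt_def by auto
  ultimately show "valid_pt l w \<and> (\<forall>j\<in>{1..l}. \<bar>fst w j - fst R j\<bar> \<le> int (snd R j))" by auto
next
  assume w: "valid_pt l w \<and> (\<forall>j\<in>{1..l}. \<bar>fst w j - fst R j\<bar> \<le> int (snd R j))"
  define v where "v = pminus w (fst R, 0)"
  have "valid_pt l v" using w assms unfolding v_def is_rect_def valid_pt_def pminus_def by auto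
  moreover have "\<bar>real_of_int (fst v j)\<bar> \<le> \<bar>real (snd R j)\<bar>" if "j \<in> {1..l}" for j
  proof -
    have "\<bar>fst v j\<bar> \<le> int (snd R j)" using w that unfolding v_def by simp
    thus ?thesis by linarith
  qed
  ultimately have "v \<in> Rec l (\<lambda>i. real (snd R i))" unfolding Rec_def by auto
  moreover have "w = padd (fst R, 0) v" unfolding v_def padd_def pminus_def by auto
  ultimately show "w \<in> rset l R" unfolding rset_def ptrans_def by auto
qed

lemma mem_rset_centered:
  "w \<in> (rset l (centered a) :: 'c::ab_group_add pt set) \<longleftrightarrow>
    valid_pt l w \<and> (\<forall>j\<in>{1..l}. \<bar>fst w j\<bar> \<le> int (a j))"
  by (simp add: mem_rset)

lemma pzero_mem_rset: "is_rect l R \<Longrightarrow> fst R = (\<lambda>j. 0) \<Longrightarrow> (pzero :: 'c::ab_group_add pt) \<in> rset l R"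
  by (simp add: mem_rset pzero_def valid_pt_def)

lemma ptrans_centered_subset:
  assumes "valid_pt l v" "\<forall>j\<in>{1..l}. \<bar>fst v j\<bar> + int (Zr j) \<le> int (D j)"
  shows "ptrans v (rset l (centered Zr)) \<subseteq> (rset l (centered D) :: 'c::ab_group_add pt set)"
proof
  fix w assume "w \<in> ptrans v (rset l (centered Zr) :: 'c pt set)"
  then obtain z where "z \<in> (rset l (centered Zr) :: 'c pt set)" "w = padd v z"
    unfolding ptrans_def by auto
  thus "w \<in> rset l (centered D)" using assms by (force simp add: mem_rset_centered)
qed

lemma rset_subset_centered_bound:
  assumes R: "is_rect l R" and sub: "rset l R \<subseteq> (rset l (centered D) :: 'c::ab_group_add pt set)"
    and j: "j \<in> {1..l}"
  shows "\<bar>fst R j\<bar> + int (snd R j) \<le> int (D j)"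
proof -
  \<comment> \<open>the corner of R lying furthest from the origin in coordinate j\<close>
  define w :: "'c pt" where "w = ((\<lambda>k. if k = j then fst R j + (if fst R j \<ge> 0 then int (snd R j)
                                                   else - int (snd R j)) else fst R k), 0)"
  have "w \<in> rset l R" using R j unfolding w_def by (auto simp: mem_rset valid_pt_def is_rect_def)
  hence "\<bar>fst w j\<bar> \<le> int (D j)" using sub j by (auto simp add: mem_rset_centered)
  moreover have "\<bar>fst w j\<bar> = \<bar>fst R j\<bar> + int (snd R j)" unfolding w_def by auto
  ultimately show ?thesis by simp
qed

locale chart_action =
  fixes G :: "('g, 'b) monoid_scheme" and act :: "'g \<Rightarrow> 'x \<Rightarrow> 'x" and X :: "'x set"
    and l :: nat and \<phi> :: "'c::{finite, ab_group_add} pt \<Rightarrow> 'g" and D Zr :: "nat \<Rightarrow> nat"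
    and HH :: "'g set set"
  assumes action: "group_action G X act" and chart: "chart G l \<phi> D Zr HH"
begin

abbreviation Dom :: "'c pt set" where "Dom \<equiv> rset l (centered D)"
abbreviation Zset :: "'c pt set" where "Zset \<equiv> rset l (centered Zr)"

sublocale GA: group_action G X act by (rule action)

lemma group: "group G"
  using action unfolding group_action_def group_hom_def by auto

sublocale GG: group G by (rule group)

lemma XH_D: "y \<in> XH G act X HH \<Longrightarrow> y \<in> X \<and> stabilizer G act y \<in> HH"
  unfolding XH_def by blast

lemma phi_carrier: "r \<in> Dom \<Longrightarrow> \<phi> r \<in> carrier G"
  using chart unfolding chart_def Let_def by blast

lemma phi_zero: "\<phi> pzero = \<one>\<^bsub>G\<^esub>"
  using chart unfolding chart_def Let_def by blast

lemma Zr_pos: "j \<in> {1..l} \<Longrightarrow> 0 < Zr j"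
  using chart unfolding chart_def Let_def by blast

lemma act_one: "y \<in> X \<Longrightarrow> act \<one>\<^bsub>G\<^esub> y = y"
  using GA.id_eq_one by (metis restrict_apply')

lemma act_inv_cancel: "y \<in> X \<Longrightarrow> g \<in> carrier G \<Longrightarrow> act (inv\<^bsub>G\<^esub> g) (act g y) = y"
  by (simp add: GA.composition_rule[symmetric] act_one)

lemma act_eq_iff_lcoset_eq:
  assumes y: "y \<in> X" and g: "g \<in> carrier G" "g' \<in> carrier G"
  shows "act g y = act g' y \<longleftrightarrow> g <#\<^bsub>G\<^esub> stabilizer G act y = g' <#\<^bsub>G\<^esub> stabilizer G act y"
proof
  have sg: "subgroup (stabilizer G act y) G" by (rule GA.stabilizer_subgroup[OF y])
  assume eq: "act g y = act g' y"
  define h where "h = inv\<^bsub>G\<^esub> g \<otimes>\<^bsub>G\<^esub> g'"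
  have "act h y = act (inv\<^bsub>G\<^esub> g) (act g' y)"
    unfolding h_def using GA.composition_rule y g by simp
  also have "\<dots> = y" using act_inv_cancel[OF y g(1)] eq by simp
  finally have "h \<in> stabilizer G act y" unfolding h_def stabilizer_def using g by simp
  moreover have "g' = g \<otimes>\<^bsub>G\<^esub> h" unfolding h_def using g by (simp add: GG.m_assoc[symmetric])
  ultimately have "g' \<in> g <#\<^bsub>G\<^esub> stabilizer G act y" unfolding l_coset_def by blast
  thus "g <#\<^bsub>G\<^esub> stabilizer G act y = g' <#\<^bsub>G\<^esub> stabilizer G act y"
    using GG.l_repr_independence[OF _ g(1) sg] by simp
next
  have sg: "subgroup (stabilizer G act y) G" by (rule GA.stabilizer_subgroup[OF y])
  assume "g <#\<^bsub>G\<^esub> stabilizer G act y = g' <#\<^bsub>G\<^esub> stabilizer G act y"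
  moreover have "g' \<in> g' <#\<^bsub>G\<^esub> stabilizer G act y"
    using subgroup.one_closed[OF sg] g(2) unfolding l_coset_def by force
  ultimately obtain h where h: "h \<in> stabilizer G act y" "g' = g \<otimes>\<^bsub>G\<^esub> h"
    unfolding l_coset_def by auto
  hence "h \<in> carrier G" "act h y = y" unfolding stabilizer_def by auto
  thus "act g y = act g' y" using h(2) GA.composition_rule[OF y g(1)] by simp
qed

lemma act_chart_inj:
  assumes y: "y \<in> XH G act X HH" and "r \<in> Dom" "s \<in> Dom" "act (\<phi> r) y = act (\<phi> s) y"
  shows "r = s"
proof -
  have "y \<in> X" "stabilizer G act y \<in> HH" using XH_D[OF y] by auto
  with assms(2-4) show ?thesis
    using chart act_eq_iff_lcoset_eq phi_carrier unfolding chart_def Let_def by metis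
qed

lemma act_chart_add:
  assumes y: "y \<in> XH G act X HH" and rs: "r \<in> Dom" "s \<in> Dom" and Z: "ptrans (padd r s) Zset \<subseteq> Dom"
  obtains z where "z \<in> Zset" "act (\<phi> r) (act (\<phi> s) y) = act (\<phi> (padd (padd r s) z)) y"
    "padd (padd r s) z \<in> Dom"
proof -
  have yX: "y \<in> X" "stabilizer G act y \<in> HH" using XH_D[OF y] by auto
  obtain z where z: "z \<in> Zset" and
    eq: "(\<phi> r \<otimes>\<^bsub>G\<^esub> \<phi> s) <#\<^bsub>G\<^esub> stabilizer G act y
         = \<phi> (padd (padd r s) z) <#\<^bsub>G\<^esub> stabilizer G act y"
    using chart rs yX(2) Z unfolding chart_def Let_def by meson
  have m: "padd (padd r s) z \<in> Dom" using Z z unfolding ptrans_def by blast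
  have "act (\<phi> r \<otimes>\<^bsub>G\<^esub> \<phi> s) y = act (\<phi> (padd (padd r s) z)) y"
    using act_eq_iff_lcoset_eq[OF yX(1)] eq phi_carrier rs m by simp
  thus thesis using that z m GA.composition_rule[OF yX(1)] phi_carrier rs by simp
qed

lemma act_chart_diff:
  assumes y: "y \<in> XH G act X HH" and rs: "r \<in> Dom" "s \<in> Dom" and Z: "ptrans (pminus r s) Zset \<subseteq> Dom"
  obtains z where "z \<in> Zset" "act (\<phi> r) (act (inv\<^bsub>G\<^esub> \<phi> s) y) = act (\<phi> (padd (pminus r s) z)) y"
    "padd (pminus r s) z \<in> Dom"
proof -
  have yX: "y \<in> X" "stabilizer G act y \<in> HH" using XH_D[OF y] by auto
  obtain z where z: "z \<in> Zset" and
    eq: "(\<phi> r \<otimes>\<^bsub>G\<^esub> inv\<^bsub>G\<^esub> \<phi> s) <#\<^bsub>G\<^esub> stabilizer G act y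
         = \<phi> (padd (pminus r s) z) <#\<^bsub>G\<^esub> stabilizer G act y"
    using chart rs yX(2) Z unfolding chart_def Let_def by meson
  have m: "padd (pminus r s) z \<in> Dom" using Z z unfolding ptrans_def by blast
  have "act (\<phi> r \<otimes>\<^bsub>G\<^esub> inv\<^bsub>G\<^esub> \<phi> s) y = act (\<phi> (padd (pminus r s) z)) y"
    using act_eq_iff_lcoset_eq[OF yX(1)] eq phi_carrier rs m by simp
  thus thesis using that z m GA.composition_rule[OF yX(1)] phi_carrier rs by simp
qed

lemma act_chart_neg_add:
  assumes y: "y \<in> XH G act X HH" and rs: "r \<in> Dom" "s \<in> Dom"
    and Z: "ptrans (padd (pneg r) s) Zset \<subseteq> Dom"
  obtains z where "z \<in> Zset" "act (inv\<^bsub>G\<^esub> \<phi> r) (act (\<phi> s) y) = act (\<phi> (padd (padd (pneg r) s) z)) y"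
    "padd (padd (pneg r) s) z \<in> Dom"
proof -
  have yX: "y \<in> X" "stabilizer G act y \<in> HH" using XH_D[OF y] by auto
  obtain z where z: "z \<in> Zset" and
    eq: "(inv\<^bsub>G\<^esub> \<phi> r \<otimes>\<^bsub>G\<^esub> \<phi> s) <#\<^bsub>G\<^esub> stabilizer G act y
         = \<phi> (padd (padd (pneg r) s) z) <#\<^bsub>G\<^esub> stabilizer G act y"
    using chart rs yX(2) Z unfolding chart_def Let_def by meson
  have m: "padd (padd (pneg r) s) z \<in> Dom" using Z z unfolding ptrans_def by blast
  have "act (inv\<^bsub>G\<^esub> \<phi> r \<otimes>\<^bsub>G\<^esub> \<phi> s) y = act (\<phi> (padd (padd (pneg r) s) z)) y"
    using act_eq_iff_lcoset_eq[OF yX(1)] eq phi_carrier rs m by simp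
  thus thesis using that z m GA.composition_rule[OF yX(1)] phi_carrier rs by simp
qed

lemma self_mem_act_img_psum:
  assumes "y \<in> X" "is_rect l R" "fst R = (\<lambda>j. 0)" "is_rect l S" "fst S = (\<lambda>j. 0)"
  shows "y \<in> act_img act \<phi> (psum (rset l R) (rset l S)) y"
proof -
  have "padd pzero pzero \<in> psum (rset l R) (rset l S :: 'c pt set)"
    unfolding psum_def using pzero_mem_rset assms(2-5) by blast
  moreover have "padd pzero pzero = (pzero :: 'c pt)" by (simp add: padd_def pzero_def)
  ultimately show ?thesis unfolding act_img_def using phi_zero act_one[OF assms(1)] by force
qed

end

lemma nat_floor_bounds: "0 \<le> (x::real) \<Longrightarrow> real (nat \<lfloor>x\<rfloor>) \<le> x \<and> x < real (nat \<lfloor>x\<rfloor>) + 1"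
  by (simp; linarith)

lemma nat_floor_mult_of_nat: "c = real m \<Longrightarrow> nat \<lfloor>c * real k\<rfloor> = m * k"
  by (metis floor_of_nat nat_int of_nat_mult)

lemma admissible_scale_bounds:
  fixes \<delta> \<epsilon> :: real and aj Lj Zj :: nat
  assumes "0 < \<delta>" "0 < \<epsilon>" "1 \<le> Zj"
    and Z: "nat \<lfloor>2 * real Zj\<rfloor> \<le> nat \<lfloor>\<delta> * real Lj\<rfloor>"
    and \<delta>\<epsilon>: "nat \<lfloor>(2 * \<delta>) * real Lj\<rfloor> \<le> nat \<lfloor>\<epsilon> * real aj\<rfloor>"
  shows "2 * real Zj \<le> \<delta> * real Lj" "2 * (\<delta> * real Lj) < \<epsilon> * real aj + 1" "4 \<le> \<epsilon> * real aj"
proof -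
  define d where "d = \<delta> * real Lj"
  define ea where "ea = \<epsilon> * real aj"
  have "nat \<lfloor>2 * real Zj\<rfloor> = 2 * Zj" by (rule nat_floor_mult_of_nat) simp
  hence "real (2 * Zj) \<le> real (nat \<lfloor>d\<rfloor>)" using Z unfolding d_def by simp
  moreover have "real (nat \<lfloor>d\<rfloor>) \<le> d" using nat_floor_bounds[of d] assms(1) unfolding d_def by simp
  ultimately show Zd: "2 * real Zj \<le> \<delta> * real Lj" unfolding d_def by simp
  have d2: "2 \<le> d" using Zd assms(3) unfolding d_def by simp
  have ea0: "0 \<le> ea" using assms(2) unfolding ea_def by simp
  have le: "real (nat \<lfloor>2 * d\<rfloor>) \<le> real (nat \<lfloor>ea\<rfloor>)"
    using \<delta>\<epsilon> unfolding d_def ea_def by (simp add: mult.assoc)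
  have "4 \<le> nat \<lfloor>2 * d\<rfloor>" using d2 by linarith
  thus "4 \<le> \<epsilon> * real aj" using le nat_floor_bounds[OF ea0] unfolding ea_def by linarith
  show "2 * (\<delta> * real Lj) < \<epsilon> * real aj + 1"
    using le nat_floor_bounds[OF ea0] nat_floor_bounds[of "2 * d"] d2 unfolding d_def ea_def by linarith
qed

lemma face_radius_bounds:
  fixes \<delta> \<epsilon> q :: real and aj Lj Zj :: nat
  assumes \<epsilon>: "0 < \<epsilon>" "\<epsilon> < 1/16" "6 * \<epsilon> < q" "q < 1/2" and aL: "aj \<le> Lj"
    and Zd: "2 * real Zj \<le> \<delta> * real Lj" and d\<epsilon>: "2 * (\<delta> * real Lj) < \<epsilon> * real aj + 1"
    and \<epsilon>4: "4 \<le> \<epsilon> * real aj"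
  defines "Lin \<equiv> int (nat \<lfloor>(1 - \<delta>) * real Lj\<rfloor>)" and "Lout \<equiv> int (nat \<lfloor>(1 + \<delta>) * real Lj\<rfloor>)"
    and "Q \<equiv> int (nat \<lfloor>q * real aj\<rfloor>)" and "Q5 \<equiv> int (nat \<lfloor>(5 * q) * real aj\<rfloor>)"
  shows "Lout - Lin + int Zj \<le> Q" "Q + int Zj \<le> Lin" "Lout - Lin + Q + 2 * int Zj \<le> Q5"
    "int Zj \<le> int aj" "0 \<le> Q" "Q \<le> int Lj" "Lin \<le> Lout" "Lout \<le> 2 * int Lj"
proof -
  define d where "d = \<delta> * real Lj"
  have apos: "0 < real aj" using \<epsilon>4 by (cases "aj = 0") auto
  have ea: "16 * (\<epsilon> * real aj) < real aj" "6 * (\<epsilon> * real aj) < q * real aj" "2 * (q * real aj) < real aj"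
    using \<epsilon> apos by (simp_all add: mult.assoc[symmetric])
  have d0: "0 \<le> d" using Zd unfolding d_def by (smt (verit) of_nat_0_le_iff)
  have dL: "d < real Lj" using aL d\<epsilon> ea \<epsilon>4 unfolding d_def by linarith
  have scaled: "(1 - \<delta>) * real Lj = real Lj - d" "(1 + \<delta>) * real Lj = real Lj + d"
    "(5 * q) * real aj = 5 * (q * real aj)" unfolding d_def by (simp_all add: algebra_simps)
  have q0: "0 \<le> q * real aj" using \<epsilon> by simp
  have Lin: "real_of_int Lin \<le> real Lj - d" "real Lj - d - 1 < real_of_int Lin"
    using nat_floor_bounds[of "real Lj - d"] dL unfolding Lin_def scaled by auto
  have Lout: "real_of_int Lout \<le> real Lj + d" "real Lj + d - 1 < real_of_int Lout"
    using nat_floor_bounds[of "real Lj + d"] d0 unfolding Lout_def scaled by auto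
  have Q: "real_of_int Q \<le> q * real aj" "q * real aj - 1 < real_of_int Q"
    using nat_floor_bounds[OF q0] unfolding Q_def by auto
  have Q5: "5 * (q * real aj) - 1 < real_of_int Q5"
    using nat_floor_bounds[of "5 * (q * real aj)"] q0 unfolding Q5_def scaled by auto
  note bounds = Lin Lout Q Q5 ea \<epsilon>4 Zd d\<epsilon> aL
  show "Lout - Lin + int Zj \<le> Q" using bounds unfolding d_def by (simp; linarith)
  show "Q + int Zj \<le> Lin" using bounds unfolding d_def by (simp; linarith)
  show "Lout - Lin + Q + 2 * int Zj \<le> Q5" using bounds unfolding d_def by (simp; linarith)
  show "int Zj \<le> int aj" using bounds unfolding d_def by (simp; linarith)
  show "0 \<le> Q" unfolding Q_def by simp
  show "Q \<le> int Lj" using bounds unfolding d_def by (simp; linarith)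
  show "Lin \<le> Lout" using bounds d0 by (simp; linarith)
  show "Lout \<le> 2 * int Lj" using bounds dL by (simp; linarith)
qed

lemma grid_spacing_bounds:
  fixes \<delta> \<epsilon> :: real and aj Lj Zj :: nat
  assumes \<epsilon>: "0 < \<epsilon>" "\<epsilon> < 1/16" and aL: "aj \<le> Lj"
    and Zd: "2 * real Zj \<le> \<delta> * real Lj" and d\<epsilon>: "2 * (\<delta> * real Lj) < \<epsilon> * real aj + 1"
    and \<epsilon>4: "4 \<le> \<epsilon> * real aj"
  defines "Lin \<equiv> int (nat \<lfloor>(1 - \<delta>) * real Lj\<rfloor>)" and "Lout \<equiv> int (nat \<lfloor>(1 + \<delta>) * real Lj\<rfloor>)"
    and "s \<equiv> int aj div 4"
  shows "1 \<le> s" "s + 2 * int Zj \<le> Lin" "Lout - Lin + 2 * int Zj + 2 * s \<le> int aj" "int aj \<le> 5 * s"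
proof -
  define d where "d = \<delta> * real Lj"
  have apos: "0 < real aj" using \<epsilon>4 by (cases "aj = 0") auto
  have ea: "16 * (\<epsilon> * real aj) < real aj" using \<epsilon> apos by (simp add: mult.assoc[symmetric])
  have d0: "0 \<le> d" using Zd unfolding d_def by (smt (verit) of_nat_0_le_iff)
  have dL: "d < real Lj" using aL d\<epsilon> ea \<epsilon>4 unfolding d_def by linarith
  have scaled: "(1 - \<delta>) * real Lj = real Lj - d" "(1 + \<delta>) * real Lj = real Lj + d"
    unfolding d_def by (simp_all add: algebra_simps)
  have Lin: "real_of_int Lin \<le> real Lj - d" "real Lj - d - 1 < real_of_int Lin"
    using nat_floor_bounds[of "real Lj - d"] dL unfolding Lin_def scaled by auto
  have Lout: "real_of_int Lout \<le> real Lj + d" "real Lj + d - 1 < real_of_int Lout"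
    using nat_floor_bounds[of "real Lj + d"] d0 unfolding Lout_def scaled by auto
  have "4 * s \<le> int aj" "int aj - 4 < 4 * s" unfolding s_def by auto
  hence s: "4 * real_of_int s \<le> real aj" "real aj - 4 < 4 * real_of_int s" by linarith+
  note bounds = Lin Lout s ea \<epsilon>4 Zd d\<epsilon> aL
  show "1 \<le> s" using bounds by linarith
  show "s + 2 * int Zj \<le> Lin" using bounds unfolding d_def by (simp; linarith)
  show "Lout - Lin + 2 * int Zj + 2 * s \<le> int aj" using bounds unfolding d_def by (simp; linarith)
  show "int aj \<le> 5 * s" using bounds by (simp; linarith)
qed

lemma two_pow_17_le_22: "l \<ge> 1 \<Longrightarrow> (2::nat) * 2 ^ (17 * l) + 16 \<le> 2 ^ (22 * l)"
proof -
  assume l: "l \<ge> 1"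
  have "(2::nat) ^ (17 * l) * 2 ^ 5 \<le> 2 ^ (17 * l) * 2 ^ (5 * l)"
    using l by (intro mult_le_mono2 power_increasing) auto
  also have "\<dots> = 2 ^ (22 * l)" by (simp add: power_add[symmetric])
  finally have "(2::nat) ^ (17 * l) * 32 \<le> 2 ^ (22 * l)" by simp
  moreover have "(1::nat) \<le> 2 ^ (17 * l)" by simp
  ultimately show ?thesis by linarith
qed

lemma two_pow_17_le_19: "l \<ge> 1 \<Longrightarrow> (2::nat) * 2 ^ (17 * l) + 1 \<le> 2 ^ (19 * l)"
proof -
  assume l: "l \<ge> 1"
  have "(2::nat) ^ (17 * l) * 2 ^ 2 \<le> 2 ^ (17 * l) * 2 ^ (2 * l)"
    using l by (intro mult_le_mono2 power_increasing) auto
  also have "\<dots> = 2 ^ (19 * l)" by (simp add: power_add[symmetric])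
  finally have "(2::nat) ^ (17 * l) * 4 \<le> 2 ^ (19 * l)" by simp
  moreover have "(1::nat) \<le> 2 ^ (17 * l)" by simp
  ultimately show ?thesis by linarith
qed

lemma grid_label_count_bound:
  assumes "l \<ge> (1::nat)"
  shows "nat (2 * (5 * (int (2 ^ (17 * l)) + 1)) + 1) ^ l * 2 \<le> (2::nat) ^ (22 * l^2)"
proof -
  define P :: nat where "P = 2 ^ (17 * l)"
  have P2: "P \<ge> 2" unfolding P_def using power_increasing[of 1 "17 * l" "2::nat"] assms by simp
  have "nat (2 * (5 * (int P + 1)) + 1) = 10 * P + 11" by simp
  also have "\<dots> \<le> 2 ^ (17 * l + 4)" using P2 unfolding P_def by (simp add: power_add)
  finally have "nat (2 * (5 * (int P + 1)) + 1) ^ l * 2 \<le> (2 ^ (17 * l + 4)) ^ l * 2"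
    by (intro mult_right_mono power_mono) auto
  also have "\<dots> = 2 ^ ((17 * l + 4) * l + 1)" by (simp only: power_add power_mult power_one_right)
  also have "\<dots> \<le> 2 ^ (22 * l^2)"
  proof (rule power_increasing)
    have "4 * l + 1 \<le> 5 * (l * l)" using assms le_square[of l] by linarith
    thus "(17 * l + 4) * l + 1 \<le> 22 * l\<^sup>2" by (simp add: power2_eq_square algebra_simps)
  qed simp
  finally show ?thesis unfolding P_def .
qed

lemma clamp_bounds:
  fixes K t L :: int
  assumes "0 \<le> K" "\<bar>t\<bar> \<le> L" "K \<le> L"
  shows "\<bar>max (-K) (min K t) - t\<bar> \<le> L - K" "\<bar>max (-K) (min K t)\<bar> \<le> K"
  using assms by (auto simp: max_def min_def abs_le_iff)

lemma mult_div_bounds: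
  fixes s T :: int
  assumes "1 \<le> s"
  shows "\<bar>s * (T div s) - T\<bar> \<le> s - 1" "\<bar>s * (T div s)\<bar> \<le> \<bar>T\<bar> + s"
proof -
  have "T = s * (T div s) + T mod s" "0 \<le> T mod s" "T mod s < s" using assms by simp_all
  thus "\<bar>s * (T div s) - T\<bar> \<le> s - 1" "\<bar>s * (T div s)\<bar> \<le> \<bar>T\<bar> + s" by linarith+
qed

locale boundary_setting = chart_action G act X l \<phi> D Zr HH
  for G :: "('g, 'b) monoid_scheme" and act :: "'g \<Rightarrow> 'x \<Rightarrow> 'x" and X :: "'x set"
    and l :: nat and \<phi> :: "'c::{finite, ab_group_add} pt \<Rightarrow> 'g" and D Zr :: "nat \<Rightarrow> nat"
    and HH :: "'g set set" +
  fixes a :: "nat \<Rightarrow> nat" and \<epsilon> q :: real and i :: nat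
  assumes eps: "0 < \<epsilon>" "\<epsilon> < 1/16" "6 * \<epsilon> < q" "q < 1/2" and i_in: "i \<in> {1..l}"
begin

text \<open>The coordinatewise conditions satisfied by the shape \<open>(\<delta>, B)\<close> of a class of a
  \<open>(\<Phi>, A, \<epsilon>)\<close>-rectangular relation, with \<open>A = centered a\<close>.\<close>

definition admissible :: "real \<Rightarrow> rect \<Rightarrow> bool" where
  "admissible \<delta> B \<longleftrightarrow> 0 < \<delta> \<and> \<delta> < 1 \<and> is_rect l B \<and>
    (\<forall>j\<in>{1..l}. nat \<lfloor>2 * real (Zr j)\<rfloor> \<le> nat \<lfloor>\<delta> * real (snd B j)\<rfloor> \<and> a j \<le> snd B j \<and>
       nat \<lfloor>(2 * \<delta>) * real (snd B j)\<rfloor> \<le> nat \<lfloor>\<epsilon> * real (a j)\<rfloor> \<and>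
       \<bar>fst B j\<bar> + int (2 ^ (22 * l) * snd B j) \<le> int (D j))"

abbreviation "rad_q j \<equiv> int (nat \<lfloor>q * real (a j)\<rfloor>)"
abbreviation "rad_5q j \<equiv> int (nat \<lfloor>(5 * q) * real (a j)\<rfloor>)"
abbreviation "rad_in \<delta> B j \<equiv> int (nat \<lfloor>(1 - \<delta>) * real (snd B j)\<rfloor>)"
abbreviation "rad_out \<delta> B j \<equiv> int (nat \<lfloor>(1 + \<delta>) * real (snd B j)\<rfloor>)"
abbreviation "grid_step j \<equiv> int (a j) div 4"
abbreviation "pow17 \<equiv> (2::nat) ^ (17 * l)"
abbreviation "grid_bound \<equiv> 5 * (int pow17 + 1)"

abbreviation A17 :: "'c pt set" where "A17 \<equiv> rset l (rscale (2 ^ (17 * l)) (centered a))"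

abbreviation face_nbhd :: "'c pt set" where
  "face_nbhd \<equiv> psum (rset l (rscale (2 ^ (19 * l)) (rdrop i (centered a))))
                    (rset l (rscale (5 * q) (centered a)))"

lemma l_pos: "1 \<le> l" using i_in by auto

lemma admissible_scale:
  assumes "admissible \<delta> B" "j \<in> {1..l}"
  shows "2 * real (Zr j) \<le> \<delta> * real (snd B j)" "2 * (\<delta> * real (snd B j)) < \<epsilon> * real (a j) + 1"
    "4 \<le> \<epsilon> * real (a j)"
  using admissible_scale_bounds[of \<delta> \<epsilon> "Zr j" "snd B j" "a j"] assms Zr_pos[OF assms(2)] eps
  unfolding admissible_def by auto

lemma admissible_domain_bounds:
  assumes "admissible \<delta> B" "j \<in> {1..l}"
  shows "a j \<le> snd B j" "\<bar>fst B j\<bar> + 16 * int (snd B j) \<le> int (D j)"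
    "\<bar>fst B j\<bar> + 2 * (int pow17 * int (snd B j)) + 16 * int (snd B j) \<le> int (D j)"
    "int pow17 * int (a j) \<le> int pow17 * int (snd B j)"
proof -
  have B: "a j \<le> snd B j" "\<bar>fst B j\<bar> + int (2 ^ (22 * l) * snd B j) \<le> int (D j)"
    using assms unfolding admissible_def by auto
  have "(2 * pow17 + 16) * snd B j \<le> 2 ^ (22 * l) * snd B j"
    using two_pow_17_le_22[OF l_pos] by (rule mult_right_mono) simp
  hence "int ((2 * pow17 + 16) * snd B j) \<le> int (2 ^ (22 * l) * snd B j)" by linarith
  hence D: "\<bar>fst B j\<bar> + (2 * int pow17 + 16) * int (snd B j) \<le> int (D j)" using B(2) by simp
  thus "\<bar>fst B j\<bar> + 2 * (int pow17 * int (snd B j)) + 16 * int (snd B j) \<le> int (D j)"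
    by (simp add: algebra_simps)
  show "\<bar>fst B j\<bar> + 16 * int (snd B j) \<le> int (D j)"
    using D mult_right_mono[of 16 "2 * int pow17 + 16" "int (snd B j)"] by linarith
  show "a j \<le> snd B j" by (rule B(1))
  show "int pow17 * int (a j) \<le> int pow17 * int (snd B j)" using B(1) by simp
qed

lemma admissible_face_bounds:
  assumes "admissible \<delta> B" "j \<in> {1..l}"
  shows "rad_out \<delta> B j - rad_in \<delta> B j + int (Zr j) \<le> rad_q j" "rad_q j + int (Zr j) \<le> rad_in \<delta> B j"
    "rad_out \<delta> B j - rad_in \<delta> B j + rad_q j + 2 * int (Zr j) \<le> rad_5q j"
    "int (Zr j) \<le> int (a j)" "0 \<le> rad_q j" "rad_q j \<le> int (snd B j)"
    "rad_in \<delta> B j \<le> rad_out \<delta> B j" "rad_out \<delta> B j \<le> 2 * int (snd B j)"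
  using face_radius_bounds[OF eps admissible_domain_bounds(1)[OF assms] admissible_scale[OF assms]]
  by simp_all

lemma admissible_grid_bounds:
  assumes "admissible \<delta> B" "j \<in> {1..l}"
  shows "1 \<le> grid_step j" "grid_step j + 2 * int (Zr j) \<le> rad_in \<delta> B j"
    "rad_out \<delta> B j - rad_in \<delta> B j + 2 * int (Zr j) + 2 * grid_step j \<le> int (a j)"
    "int (a j) \<le> 5 * grid_step j"
  using grid_spacing_bounds[OF eps(1,2) admissible_domain_bounds(1)[OF assms] admissible_scale[OF assms]]
  by simp_all

lemma admissible_of_rectangular:
  assumes "\<delta> > 0" "is_rect l B" "roughly G act X l \<phi> D Zr HH \<delta> B z U" "rle l (centered a) B"
    "rset l (rscale (2 ^ (22 * l)) B) \<subseteq> Dom" "rle l (rscale (2 * \<delta>) B) (rscale \<epsilon> (centered a))"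
  shows "admissible \<delta> B"
proof -
  have "\<delta> < 1" "rle l (rscale 2 (centered Zr)) (rscale \<delta> B)" using assms(3) unfolding roughly_def by auto
  moreover have "\<bar>fst B j\<bar> + int (2 ^ (22 * l) * snd B j) \<le> int (D j)" if "j \<in> {1..l}" for j
    using rset_subset_centered_bound[OF _ assms(5) that] assms(2)
    by (simp add: nat_floor_mult_of_nat[of "2 ^ (22 * l)" "2 ^ (22 * l)"])
  ultimately show ?thesis using assms unfolding admissible_def rle_def by auto
qed

definition class_shape :: "'x set \<Rightarrow> real \<Rightarrow> rect \<Rightarrow> 'x \<Rightarrow> bool" where
  "class_shape U \<delta> B z \<longleftrightarrow> admissible \<delta> B \<and> z \<in> XH G act X HH \<and>
     act_img act \<phi> (rset l (rscale (1 - \<delta>) B)) z \<subseteq> U \<and>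
     U \<subseteq> act_img act \<phi> (rset l (rscale (1 + \<delta>) B)) z"

lemma rectangular_class_shape:
  assumes "rectangular G act X l \<phi> D Zr HH a \<epsilon> F" "U \<in> X // F" "U \<inter> XH G act X HH \<noteq> {}"
  shows "\<exists>\<delta> B z. class_shape U \<delta> B z"
proof -
  obtain \<delta> B z where "\<delta> > 0" "is_rect l B" "z \<in> XH G act X HH" "roughly G act X l \<phi> D Zr HH \<delta> B z U"
    "rle l (centered a) B" "rset l (rscale (2 ^ (22 * l)) B) \<subseteq> Dom"
    "rle l (rscale (2 * \<delta>) B) (rscale \<epsilon> (centered a))"
    using assms(1)[unfolded rectangular_def, THEN conjunct2, THEN conjunct2, rule_format, OF assms(2,3)]
    by blast
  moreover from this have "admissible \<delta> B" by (intro admissible_of_rectangular)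
  ultimately show ?thesis unfolding class_shape_def roughly_def by blast
qed

lemma outer_rect_mem:
  assumes "admissible \<delta> B" "b \<in> rset l (rscale (1 + \<delta>) B)"
  shows "valid_pt l b" "\<And>j. j \<in> {1..l} \<Longrightarrow> \<bar>fst b j - fst B j\<bar> \<le> rad_out \<delta> B j" "b \<in> Dom"
proof -
  have R: "is_rect l B" using assms(1) unfolding admissible_def by auto
  show b: "valid_pt l b" "\<And>j. j \<in> {1..l} \<Longrightarrow> \<bar>fst b j - fst B j\<bar> \<le> rad_out \<delta> B j"
    using assms(2) R by (simp_all add: mem_rset)
  have "\<bar>fst b j\<bar> \<le> int (D j)" if "j \<in> {1..l}" for j
    using b(2)[OF that] admissible_face_bounds(8)[OF assms(1) that]
      admissible_domain_bounds(2)[OF assms(1) that] by linarith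
  thus "b \<in> Dom" using b(1) by (simp add: mem_rset_centered)
qed

lemma A17_mem:
  assumes "v \<in> A17"
  shows "valid_pt l v" "\<And>j. j \<in> {1..l} \<Longrightarrow> \<bar>fst v j\<bar> \<le> int pow17 * int (a j)"
  using assms by (auto simp: mem_rset nat_floor_mult_of_nat[of "2 ^ (17 * l)" "2 ^ (17 * l)"])

lemma A17_subset_Dom:
  assumes "admissible \<delta> B" "v \<in> A17"
  shows "v \<in> Dom"
proof -
  have "\<bar>fst v j\<bar> \<le> int (D j)" if "j \<in> {1..l}" for j
    using A17_mem(2)[OF assms(2) that] admissible_domain_bounds(3,4)[OF assms(1) that] by linarith
  thus ?thesis using A17_mem(1)[OF assms(2)] by (simp add: mem_rset_centered)
qed

text \<open>Moving \<open>b\<close> by \<open>face_probe b B\<close> pulls every coordinate other than \<open>i\<close> back towards the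
  centre of \<open>B\<close> by \<open>q a\<^sub>j\<close>, so that the probes \<open>\<plusminus>q a\<^sub>i e\<^sub>i\<close> stay in the inner rectangle.\<close>

definition face_probe :: "'c pt \<Rightarrow> rect \<Rightarrow> 'c pt" where
  "face_probe b B = ((\<lambda>j. if j \<in> {1..l} \<and> j \<noteq> i
                          then (if fst b j - fst B j \<ge> 0 then - rad_q j else rad_q j) else 0), 0)"

lemma face_probe_valid: "valid_pt l (face_probe b B)"
  unfolding face_probe_def valid_pt_def by auto

lemma face_probe_mem: "face_probe b B \<in> rset l (rdrop i (rscale q (centered a)))"
  by (auto simp: mem_rset face_probe_valid) (auto simp: face_probe_def)

lemma face_probe_in_class:
  assumes shape: "class_shape U \<delta> B z" and b: "b \<in> rset l (rscale (1 + \<delta>) B)" "y = act (\<phi> b) z"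
    and far: "\<bar>fst b i - fst B i\<bar> \<le> rad_in \<delta> B i - rad_q i - int (Zr i)"
    and k: "k = rad_q i \<or> k = - rad_q i"
  shows "act (\<phi> (padd (pe i k) (face_probe b B))) y \<in> U"
proof -
  have adm: "admissible \<delta> B" and z: "z \<in> XH G act X HH"
    and inner: "act_img act \<phi> (rset l (rscale (1 - \<delta>) B)) z \<subseteq> U"
    using shape unfolding class_shape_def by auto
  have R: "is_rect l B" using adm unfolding admissible_def by auto
  note bm = outer_rect_mem[OF adm b(1)]
  define w where "w = padd (pe i k) (face_probe b B)"
  have wv: "valid_pt l w" unfolding w_def using face_probe_valid i_in by simp
  have wj: "fst w j = (if j = i then k else if j \<in> {1..l}
                       then (if fst b j - fst B j \<ge> 0 then - rad_q j else rad_q j) else 0)" for j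
    unfolding w_def face_probe_def by simp
  have wb: "\<bar>fst w j\<bar> \<le> rad_q j" if "j \<in> {1..l}" for j
    using wj[of j] k that admissible_face_bounds(5)[OF adm that] by auto
  have "\<bar>fst w j\<bar> \<le> int (D j)" if "j \<in> {1..l}" for j
    using wb[OF that] admissible_face_bounds(6)[OF adm that] admissible_domain_bounds(2)[OF adm that]
    by linarith
  hence wD: "w \<in> Dom" using wv by (simp add: mem_rset_centered)
  have "\<bar>fst (padd w b) j\<bar> + int (Zr j) \<le> int (D j)" if j: "j \<in> {1..l}" for j
    using wb[OF j] bm(2)[OF j] admissible_face_bounds(4,6,8)[OF adm j]
      admissible_domain_bounds(1,2)[OF adm j] by simp
  hence "ptrans (padd w b) Zset \<subseteq> Dom" using wv bm(1) by (intro ptrans_centered_subset) auto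
  then obtain e where e: "e \<in> Zset" "act (\<phi> w) (act (\<phi> b) z) = act (\<phi> (padd (padd w b) e)) z"
    using act_chart_add[OF z wD bm(3)] by metis
  have ej: "valid_pt l e" "\<And>j. j \<in> {1..l} \<Longrightarrow> \<bar>fst e j\<bar> \<le> int (Zr j)"
    using e(1) by (auto simp: mem_rset_centered)
  have "\<bar>fst w j + fst b j + fst e j - fst B j\<bar> \<le> rad_in \<delta> B j" if j: "j \<in> {1..l}" for j
  proof (cases "j = i")
    case True
    then show ?thesis using wj[of j] k far ej(2)[OF j] by (simp add: abs_le_iff; arith)
  next
    case False
    then show ?thesis using wj[of j] j bm(2)[OF j] ej(2)[OF j] admissible_face_bounds(1,2)[OF adm j]
      by (simp add: abs_le_iff; arith)
  qed
  hence "padd (padd w b) e \<in> rset l (rscale (1 - \<delta>) B)" using R wv bm(1) ej(1) by (simp add: mem_rset)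
  hence "act (\<phi> (padd (padd w b) e)) z \<in> U" using inner unfolding act_img_def by blast
  thus ?thesis using e(2) b(2) unfolding w_def by simp
qed

lemma boundary_point_near_face:
  assumes shape: "class_shape U \<delta> B z" and UE: "\<forall>u\<in>U. \<forall>u'\<in>U. (u, u') \<in> E"
    and y: "y \<in> boundary G act X l \<phi> HH E (rscale q (centered a)) i"
    and b: "b \<in> rset l (rscale (1 + \<delta>) B)" "y = act (\<phi> b) z"
  shows "rad_in \<delta> B i - rad_q i - int (Zr i) < \<bar>fst b i - fst B i\<bar>"
proof (rule ccontr)
  let ?A = "rscale q (centered a)"
  assume "\<not> ?thesis"
  hence far: "\<bar>fst b i - fst B i\<bar> \<le> rad_in \<delta> B i - rad_q i - int (Zr i)" by simp
  define p where "p k = act (\<phi> (padd (pe i k) (face_probe b B))) y" for k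
  have inU: "p (rad_q i) \<in> U" "p (- rad_q i) \<in> U"
    unfolding p_def using face_probe_in_class[OF shape b far] by auto
  have "p (int (snd ?A i)) \<in> act_img act \<phi> (ptrans (pe i (int (snd ?A i))) (rset l (rdrop i ?A))) y"
    "p (- int (snd ?A i)) \<in> act_img act \<phi> (ptrans (pe i (- int (snd ?A i))) (rset l (rdrop i ?A))) y"
    unfolding p_def act_img_def ptrans_def using face_probe_mem by auto
  moreover have "(p (rad_q i), p (rad_q i)) \<in> E" "(p (- rad_q i), p (rad_q i)) \<in> E"
    using UE inU by auto
  ultimately show False using y unfolding boundary_def by auto
qed

definition grid_pt :: "(nat \<Rightarrow> int) \<Rightarrow> 'c pt" where
  "grid_pt k = ((\<lambda>j. if j \<in> {1..l} then grid_step j * k j else 0), 0)"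

lemma grid_pt_valid: "valid_pt l (grid_pt k)"
  unfolding grid_pt_def valid_pt_def by auto

text \<open>Writing \<open>z = \<phi>(u)\<cdot>x\<close>, clamp the offset \<open>b - c\<^sub>B\<close> of \<open>y\<close> into the inner box and round
  \<open>u + c\<^sub>B\<close> plus the clamped offset down to the grid \<open>(a/4)\<^sup>\<nat>\<close>; the rounding and chart errors
  are absorbed by the margin between \<open>(1 - \<delta>) B\<close> and \<open>(1 + \<delta>) B\<close>.\<close>

lemma class_has_grid_point:
  assumes shape: "class_shape U \<delta> B z" and x: "x \<in> XH G act X HH"
    and b: "b \<in> rset l (rscale (1 + \<delta>) B)" "y = act (\<phi> b) z"
    and v: "v \<in> A17" "y = act (\<phi> v) x"
  obtains k where "\<forall>j\<in>{1..l}. \<bar>k j\<bar> \<le> grid_bound" "act (\<phi> (grid_pt k)) x \<in> U"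
proof -
  have adm: "admissible \<delta> B" and z: "z \<in> XH G act X HH"
    and inner: "act_img act \<phi> (rset l (rscale (1 - \<delta>) B)) z \<subseteq> U"
    using shape unfolding class_shape_def by auto
  have R: "is_rect l B" using adm unfolding admissible_def by auto
  note bm = outer_rect_mem[OF adm b(1)] and vm = A17_mem[OF v(1)]
  have vD: "v \<in> Dom" by (rule A17_subset_Dom[OF adm v(1)])
  have zX: "z \<in> X" and xX: "x \<in> X" using XH_D z x by auto
  have bj: "\<bar>fst b j\<bar> \<le> \<bar>fst B j\<bar> + rad_out \<delta> B j" if "j \<in> {1..l}" for j
    using bm(2)[OF that] by arith
  have aL: "int (a j) \<le> int (snd B j)" if "j \<in> {1..l}" for j
    using admissible_domain_bounds(1)[OF adm that] by simp
  have "\<bar>fst (padd (pneg b) v) j\<bar> + int (Zr j) \<le> int (D j)" if j: "j \<in> {1..l}" for j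
  proof -
    have "\<bar>fst (padd (pneg b) v) j\<bar> \<le> \<bar>fst b j\<bar> + \<bar>fst v j\<bar>" by simp
    thus ?thesis using bj[OF j] vm(2)[OF j] aL[OF j] admissible_face_bounds(4,8)[OF adm j]
      admissible_domain_bounds(3,4)[OF adm j] by linarith
  qed
  hence "ptrans (padd (pneg b) v) Zset \<subseteq> Dom" using bm(1) vm(1) by (intro ptrans_centered_subset) auto
  then obtain e1 where e1: "e1 \<in> Zset" "act (inv\<^bsub>G\<^esub> \<phi> b) (act (\<phi> v) x) = act (\<phi> (padd (padd (pneg b) v) e1)) x"
    "padd (padd (pneg b) v) e1 \<in> Dom"
    using act_chart_neg_add[OF x bm(3) vD] by metis
  define u where "u = padd (padd (pneg b) v) e1"
  have "act (inv\<^bsub>G\<^esub> \<phi> b) (act (\<phi> v) x) = z" using v(2)[symmetric] b(2) act_inv_cancel[OF zX phi_carrier[OF bm(3)]] by simp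
  hence zu: "z = act (\<phi> u) x" using e1(2) unfolding u_def by simp
  have xu: "act (inv\<^bsub>G\<^esub> \<phi> u) z = x" using zu act_inv_cancel[OF xX phi_carrier[OF e1(3)]] unfolding u_def by simp
  have e1j: "valid_pt l e1" "\<And>j. j \<in> {1..l} \<Longrightarrow> \<bar>fst e1 j\<bar> \<le> int (Zr j)" using e1(1) by (auto simp: mem_rset_centered)
  define K where "K j = rad_in \<delta> B j - grid_step j - 2 * int (Zr j)" for j
  define p where "p j = max (- K j) (min (K j) (fst b j - fst B j))" for j
  define T where "T j = fst v j + p j - (fst b j - fst B j)" for j
  define k where "k j = T j div grid_step j" for j
  define g where "g = grid_pt k"
  have gj: "fst g j = grid_step j * k j" if "j \<in> {1..l}" for j unfolding g_def grid_pt_def using that by simp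
  have gT: "\<bar>fst g j - T j\<bar> \<le> grid_step j - 1" "\<bar>p j\<bar> \<le> K j"
    "\<bar>fst g j\<bar> \<le> int pow17 * int (a j) + int (a j)" if j: "j \<in> {1..l}" for j
  proof -
    note s = admissible_grid_bounds[OF adm j]
    have K: "0 \<le> K j" "K j \<le> rad_out \<delta> B j"
      unfolding K_def using s(1,2) admissible_face_bounds(7)[OF adm j] by simp_all
    note C = clamp_bounds[OF K(1) bm(2)[OF j] K(2)] and M = mult_div_bounds[OF s(1), of "T j"]
    show "\<bar>fst g j - T j\<bar> \<le> grid_step j - 1" using M(1) gj[OF j] unfolding k_def by simp
    show "\<bar>p j\<bar> \<le> K j" using C(2) unfolding p_def .
    have "\<bar>T j\<bar> \<le> \<bar>fst v j\<bar> + (rad_out \<delta> B j - K j)" using C(1) unfolding T_def p_def by arith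
    thus "\<bar>fst g j\<bar> \<le> int pow17 * int (a j) + int (a j)"
      using M(2) gj[OF j] vm(2)[OF j] s(3) unfolding K_def k_def by linarith
  qed
  have kb: "\<bar>k j\<bar> \<le> grid_bound" if j: "j \<in> {1..l}" for j
  proof -
    note s = admissible_grid_bounds[OF adm j]
    have "grid_step j * \<bar>k j\<bar> = \<bar>fst g j\<bar>" using gj[OF j] s(1) by (simp add: abs_mult)
    also have "\<dots> \<le> (int pow17 + 1) * int (a j)" using gT(3)[OF j] by (simp add: algebra_simps)
    also have "\<dots> \<le> (int pow17 + 1) * (5 * grid_step j)" using s(4) by (intro mult_left_mono) auto
    also have "\<dots> = grid_step j * grid_bound" by (simp add: algebra_simps)
    finally show ?thesis using s(1) by (simp add: mult_le_cancel_left_pos)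
  qed
  have gv: "valid_pt l g" unfolding g_def by (rule grid_pt_valid)
  have "\<bar>fst g j\<bar> \<le> int (D j)" if "j \<in> {1..l}" for j
    using gT(3)[OF that] aL[OF that] admissible_domain_bounds(3,4)[OF adm that] by linarith
  hence gD: "g \<in> Dom" using gv by (simp add: mem_rset_centered)
  have uv: "valid_pt l u" unfolding u_def using bm(1) vm(1) e1j(1) by simp
  have "\<bar>fst (pminus g u) j\<bar> + int (Zr j) \<le> int (D j)" if j: "j \<in> {1..l}" for j
  proof -
    have "\<bar>fst (pminus g u) j\<bar> \<le> \<bar>fst g j\<bar> + \<bar>fst b j\<bar> + \<bar>fst v j\<bar> + \<bar>fst e1 j\<bar>"
      unfolding u_def by simp
    thus ?thesis using gT(3)[OF j] bj[OF j] vm(2)[OF j] e1j(2)[OF j] aL[OF j]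
      admissible_face_bounds(4,8)[OF adm j] admissible_domain_bounds(3,4)[OF adm j] by linarith
  qed
  hence "ptrans (pminus g u) Zset \<subseteq> Dom" using gv uv by (intro ptrans_centered_subset) auto
  then obtain e2 where e2: "e2 \<in> Zset" "act (\<phi> g) (act (inv\<^bsub>G\<^esub> \<phi> u) z) = act (\<phi> (padd (pminus g u) e2)) z"
    using act_chart_diff[OF z gD e1(3)] unfolding u_def by metis
  have e2j: "valid_pt l e2" "\<And>j. j \<in> {1..l} \<Longrightarrow> \<bar>fst e2 j\<bar> \<le> int (Zr j)" using e2(1) by (auto simp: mem_rset_centered)
  have "\<bar>fst g j - fst u j + fst e2 j - fst B j\<bar> \<le> rad_in \<delta> B j" if j: "j \<in> {1..l}" for j
  proof -
    have "fst g j - fst u j + fst e2 j - fst B j = (fst g j - T j) + p j - fst e1 j + fst e2 j"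
      unfolding u_def T_def by simp
    thus ?thesis using gT(1,2)[OF j] e1j(2)[OF j] e2j(2)[OF j] unfolding K_def by simp
  qed
  hence "padd (pminus g u) e2 \<in> rset l (rscale (1 - \<delta>) B)" using R gv uv e2j(1) by (simp add: mem_rset)
  hence "act (\<phi> g) x \<in> U" using inner e2(2) xu unfolding act_img_def by auto
  thus thesis using that kb unfolding g_def by blast
qed

text \<open>Chart injectivity at \<open>y\<^sub>1\<close> identifies the two displacements from \<open>y\<^sub>1\<close> to \<open>y\<^sub>2\<close>, one
  via \<open>z\<close> and one via \<open>x\<close>: the first is short in coordinate \<open>i\<close> because both points sit near the
  same \<open>i\<close>-face, the second is at most \<open>2\<^sup>1\<^sup>9\<^sup>\<ell> a\<^sub>j\<close> in every coordinate.\<close>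

lemma same_face_points_close:
  assumes adm: "admissible \<delta> B" and z: "z \<in> XH G act X HH" and x: "x \<in> XH G act X HH"
    and y1: "y1 \<in> XH G act X HH"
    and b1: "b1 \<in> rset l (rscale (1 + \<delta>) B)" "y1 = act (\<phi> b1) z" and v1: "v1 \<in> A17" "y1 = act (\<phi> v1) x"
    and b2: "b2 \<in> rset l (rscale (1 + \<delta>) B)" "y2 = act (\<phi> b2) z" and v2: "v2 \<in> A17" "y2 = act (\<phi> v2) x"
    and near: "rad_in \<delta> B i - rad_q i - int (Zr i) < \<bar>fst b1 i - fst B i\<bar>"
      "rad_in \<delta> B i - rad_q i - int (Zr i) < \<bar>fst b2 i - fst B i\<bar>"
    and same_side: "(0 < fst b1 i - fst B i) = (0 < fst b2 i - fst B i)"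
  shows "y2 \<in> act_img act \<phi> face_nbhd y1"
proof -
  note bm1 = outer_rect_mem[OF adm b1(1)] and bm2 = outer_rect_mem[OF adm b2(1)]
  note vm1 = A17_mem[OF v1(1)] and vm2 = A17_mem[OF v2(1)]
  have vD: "v1 \<in> Dom" "v2 \<in> Dom" using A17_subset_Dom[OF adm] v1(1) v2(1) by auto
  have zX: "z \<in> X" and xX: "x \<in> X" using XH_D z x by auto
  have "\<bar>fst (pminus b2 b1) j\<bar> + int (Zr j) \<le> int (D j)" if j: "j \<in> {1..l}" for j
    using bm1(2)[OF j] bm2(2)[OF j] admissible_face_bounds(4,8)[OF adm j]
      admissible_domain_bounds(1,2)[OF adm j] by simp
  hence "ptrans (pminus b2 b1) Zset \<subseteq> Dom" using bm1(1) bm2(1) by (intro ptrans_centered_subset) auto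
  then obtain e1 where e1: "e1 \<in> Zset"
    "act (\<phi> b2) (act (inv\<^bsub>G\<^esub> \<phi> b1) y1) = act (\<phi> (padd (pminus b2 b1) e1)) y1"
    "padd (pminus b2 b1) e1 \<in> Dom"
    using act_chart_diff[OF y1 bm2(3) bm1(3)] by metis
  have "\<bar>fst (pminus v2 v1) j\<bar> + int (Zr j) \<le> int (D j)" if j: "j \<in> {1..l}" for j
  proof -
    have "\<bar>fst (pminus v2 v1) j\<bar> \<le> \<bar>fst v2 j\<bar> + \<bar>fst v1 j\<bar>" by simp
    moreover have "int (a j) \<le> int (snd B j)" using admissible_domain_bounds(1)[OF adm j] by simp
    ultimately show ?thesis using vm1(2)[OF j] vm2(2)[OF j] admissible_face_bounds(4)[OF adm j]
        admissible_domain_bounds(3,4)[OF adm j] by linarith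
  qed
  hence "ptrans (pminus v2 v1) Zset \<subseteq> Dom" using vm1(1) vm2(1) by (intro ptrans_centered_subset) auto
  then obtain e2 where e2: "e2 \<in> Zset"
    "act (\<phi> v2) (act (inv\<^bsub>G\<^esub> \<phi> v1) y1) = act (\<phi> (padd (pminus v2 v1) e2)) y1"
    "padd (pminus v2 v1) e2 \<in> Dom"
    using act_chart_diff[OF y1 vD(2,1)] by metis
  define w where "w = padd (pminus v2 v1) e2"
  have "y2 = act (\<phi> (padd (pminus b2 b1) e1)) y1"
    using e1(2) b1(2) b2(2) act_inv_cancel[OF zX phi_carrier[OF bm1(3)]] by simp
  moreover have y2w: "y2 = act (\<phi> w) y1"
    using e2(2) v1(2) v2(2) act_inv_cancel[OF xX phi_carrier[OF vD(1)]] unfolding w_def by simp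
  ultimately have w_eq: "w = padd (pminus b2 b1) e1" using act_chart_inj[OF y1 e2(3) e1(3)] unfolding w_def by simp
  have e1i: "\<bar>fst e1 i\<bar> \<le> int (Zr i)" using e1(1) i_in by (auto simp: mem_rset_centered)
  have e2j: "valid_pt l e2" "\<And>j. j \<in> {1..l} \<Longrightarrow> \<bar>fst e2 j\<bar> \<le> int (Zr j)" using e2(1) by (auto simp: mem_rset_centered)
  define w1 :: "'c pt" where "w1 = ((\<lambda>j. if j = i then 0 else fst w j), 0)"
  define w2 :: "'c pt" where "w2 = ((\<lambda>j. if j = i then fst w i else 0), snd w)"
  have "w = padd w1 w2" unfolding w1_def w2_def padd_def by (cases w) auto
  moreover have "w1 \<in> rset l (rscale (2 ^ (19 * l)) (rdrop i (centered a)))"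
  proof -
    have "\<bar>fst w1 j\<bar> \<le> int (nat \<lfloor>2 ^ (19 * l) * real ((a(i := 0)) j)\<rfloor>)" if j: "j \<in> {1..l}" for j
    proof (cases "j = i")
      case False
      have "\<bar>fst w j\<bar> \<le> 2 * (int pow17 * int (a j)) + int (a j)"
        unfolding w_def using vm1(2)[OF j] vm2(2)[OF j] e2j(2)[OF j] admissible_face_bounds(4)[OF adm j] by simp
      also have "\<dots> = int ((2 * pow17 + 1) * a j)" by (simp add: algebra_simps)
      also have "\<dots> \<le> int (2 ^ (19 * l) * a j)"
        using two_pow_17_le_19[OF l_pos] by (intro of_nat_mono mult_right_mono) auto
      finally show ?thesis unfolding w1_def using False
        by (simp add: nat_floor_mult_of_nat[of "2 ^ (19 * l)" "2 ^ (19 * l)"])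
    qed (simp add: w1_def)
    moreover have "valid_pt l w1" using vm1(1) vm2(1) e2j(1) unfolding w_def w1_def valid_pt_def by auto
    ultimately show ?thesis by (auto simp: mem_rset)
  qed
  moreover have "w2 \<in> rset l (rscale (5 * q) (centered a))"
  proof -
    have "\<bar>fst b2 i - fst b1 i\<bar> \<le> rad_out \<delta> B i - (rad_in \<delta> B i - rad_q i - int (Zr i)) - 1"
      using near same_side bm1(2)[OF i_in] bm2(2)[OF i_in] by (simp add: abs_le_iff abs_less_iff; arith)
    hence "\<bar>fst w i\<bar> \<le> rad_5q i" using w_eq e1i admissible_face_bounds(3)[OF adm i_in] by simp
    moreover have "valid_pt l w2" using i_in unfolding w2_def valid_pt_def by auto
    ultimately show ?thesis unfolding w2_def by (auto simp: mem_rset)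
  qed
  ultimately show ?thesis unfolding act_img_def psum_def using y2w by blast
qed

lemma boundary_point_label:
  assumes shape: "class_shape U \<delta> B z" and UE: "\<forall>u\<in>U. \<forall>u'\<in>U. (u, u') \<in> E" and yU: "y \<in> U"
    and x: "x \<in> XH G act X HH"
    and y: "y \<in> boundary G act X l \<phi> HH E (rscale q (centered a)) i \<inter> act_img act \<phi> A17 x"
  obtains b v k where "b \<in> rset l (rscale (1 + \<delta>) B)" "y = act (\<phi> b) z" "v \<in> A17" "y = act (\<phi> v) x"
    "rad_in \<delta> B i - rad_q i - int (Zr i) < \<bar>fst b i - fst B i\<bar>"
    "\<forall>j\<in>{1..l}. \<bar>k j\<bar> \<le> grid_bound" "act (\<phi> (grid_pt k)) x \<in> U"
proof -
  obtain b where b: "b \<in> rset l (rscale (1 + \<delta>) B)" "y = act (\<phi> b) z"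
    using shape yU unfolding class_shape_def act_img_def by blast
  obtain v where v: "v \<in> A17" "y = act (\<phi> v) x" using y unfolding act_img_def by blast
  obtain k where "\<forall>j\<in>{1..l}. \<bar>k j\<bar> \<le> grid_bound" "act (\<phi> (grid_pt k)) x \<in> U"
    using class_has_grid_point[OF shape x b v] .
  moreover have "rad_in \<delta> B i - rad_q i - int (Zr i) < \<bar>fst b i - fst B i\<bar>"
    using boundary_point_near_face[OF shape UE _ b] y by blast
  ultimately show thesis using that b v by blast
qed

lemma card_labels_le:
  "card (PiE {1..l} (\<lambda>_. {-grid_bound..grid_bound}) \<times> (UNIV :: bool set)) \<le> 2 ^ (22 * l^2)"
  using grid_label_count_bound[OF l_pos] by (simp add: card_cartesian_product card_PiE)

lemma boundary_points_bound:
  fixes t :: nat and y :: "nat \<Rightarrow> 'x"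
  assumes sub: "sub_rectangular G act X l \<phi> D Zr HH a \<epsilon> E" and x: "x \<in> XH G act X HH"
    and y: "\<forall>r\<in>{1..t}. y r \<in> boundary G act X l \<phi> HH E (rscale q (centered a)) i \<inter> act_img act \<phi> A17 x"
    and disj: "\<forall>r\<in>{1..t}. \<forall>s\<in>{1..t}. r \<noteq> s \<longrightarrow>
                 act_img act \<phi> face_nbhd (y r) \<inter> act_img act \<phi> face_nbhd (y s) = {}"
  shows "t \<le> 2 ^ (22 * l^2)"
proof -
  obtain F where FE: "F \<subseteq> E" and rect: "rectangular G act X l \<phi> D Zr HH a \<epsilon> F"
    using sub unfolding sub_rectangular_def by blast
  have eqF: "equiv X F" using rect unfolding rectangular_def by blast
  obtain \<delta> B z where shape: "\<And>U. U \<in> X // F \<Longrightarrow> U \<inter> XH G act X HH \<noteq> {} \<Longrightarrow>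
      class_shape U (\<delta> U) (B U) (z U)"
    using rectangular_class_shape[OF rect] by metis
  define U where "U r = F `` {y r}" for r
  have yXH: "y r \<in> XH G act X HH" if "r \<in> {1..t}" for r using y that unfolding boundary_def by blast
  have U: "U r \<in> X // F" "y r \<in> U r" "\<forall>u\<in>U r. \<forall>u'\<in>U r. (u, u') \<in> E"
    "class_shape (U r) (\<delta> (U r)) (B (U r)) (z (U r))" if r: "r \<in> {1..t}" for r
  proof -
    have yX: "y r \<in> X" using XH_D[OF yXH[OF r]] by blast
    show "U r \<in> X // F" unfolding U_def using yX by (rule quotientI)
    show "y r \<in> U r" unfolding U_def using eqF yX unfolding equiv_def refl_on_def by blast
    show "\<forall>u\<in>U r. \<forall>u'\<in>U r. (u, u') \<in> E"
      using eqF FE unfolding U_def equiv_def sym_def trans_def by blast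
    show "class_shape (U r) (\<delta> (U r)) (B (U r)) (z (U r))"
      using shape \<open>U r \<in> X // F\<close> \<open>y r \<in> U r\<close> yXH[OF r] by blast
  qed
  have "\<exists>b v k.
      b \<in> rset l (rscale (1 + \<delta> (U r)) (B (U r))) \<and> y r = act (\<phi> b) (z (U r)) \<and>
      v \<in> A17 \<and> y r = act (\<phi> v) x \<and>
      rad_in (\<delta> (U r)) (B (U r)) i - rad_q i - int (Zr i) < \<bar>fst b i - fst (B (U r)) i\<bar> \<and>
      (\<forall>j\<in>{1..l}. \<bar>k j\<bar> \<le> grid_bound) \<and> act (\<phi> (grid_pt k)) x \<in> U r" if r: "r \<in> {1..t}" for r
    by (rule boundary_point_label[OF U(4)[OF r] U(3)[OF r] U(2)[OF r] x]) (use y r in blast)+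
  then obtain b v k where data: "\<And>r. r \<in> {1..t} \<Longrightarrow>
      b r \<in> rset l (rscale (1 + \<delta> (U r)) (B (U r))) \<and> y r = act (\<phi> (b r)) (z (U r)) \<and>
      v r \<in> A17 \<and> y r = act (\<phi> (v r)) x \<and>
      rad_in (\<delta> (U r)) (B (U r)) i - rad_q i - int (Zr i) < \<bar>fst (b r) i - fst (B (U r)) i\<bar> \<and>
      (\<forall>j\<in>{1..l}. \<bar>k r j\<bar> \<le> grid_bound) \<and> act (\<phi> (grid_pt (k r))) x \<in> U r"
    by metis
  define label where "label r = (restrict (k r) {1..l}, 0 < fst (b r) i - fst (B (U r)) i)" for r
  have inj: "inj_on label {1..t}"
  proof (rule inj_onI, rule ccontr)
    fix r s assume r: "r \<in> {1..t}" and s: "s \<in> {1..t}" and eq: "label r = label s" and "r \<noteq> s"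
    have "restrict (k r) {1..l} = restrict (k s) {1..l}" using eq unfolding label_def by simp
    hence "\<forall>j\<in>{1..l}. k r j = k s j" by (metis restrict_apply')
    hence "grid_pt (k r) = grid_pt (k s)" unfolding grid_pt_def by auto
    hence "U r = U s" using quotient_disj[OF eqF U(1)[OF r] U(1)[OF s]] data[OF r] data[OF s] by auto
    hence ds: "b s \<in> rset l (rscale (1 + \<delta> (U r)) (B (U r)))" "y s = act (\<phi> (b s)) (z (U r))"
      "rad_in (\<delta> (U r)) (B (U r)) i - rad_q i - int (Zr i) < \<bar>fst (b s) i - fst (B (U r)) i\<bar>"
      "(0 < fst (b r) i - fst (B (U r)) i) = (0 < fst (b s) i - fst (B (U r)) i)"
      using data[OF s] eq unfolding label_def by auto
    have "admissible (\<delta> (U r)) (B (U r))" "z (U r) \<in> XH G act X HH"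
      using U(4)[OF r] unfolding class_shape_def by auto
    hence "y s \<in> act_img act \<phi> face_nbhd (y r)"
      using same_face_points_close[of "\<delta> (U r)" "B (U r)" "z (U r)" x "y r" "b r" "v r" "b s" "y s" "v s"]
        x yXH[OF r] data[OF r] data[OF s] ds by blast
    moreover have "y s \<in> act_img act \<phi> face_nbhd (y s)"
      using XH_D[OF yXH[OF s]] by (intro self_mem_act_img_psum) auto
    ultimately show False using disj r s \<open>r \<noteq> s\<close> by blast
  qed
  have range: "label ` {1..t} \<subseteq> PiE {1..l} (\<lambda>_. {-grid_bound..grid_bound}) \<times> UNIV"
  proof
    fix p assume "p \<in> label ` {1..t}"
    then obtain r where r: "r \<in> {1..t}" "p = label r" by blast
    have "\<forall>j\<in>{1..l}. \<bar>k r j\<bar> \<le> grid_bound" using data[OF r(1)] by blast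
    hence "\<forall>j\<in>{1..l}. k r j \<in> {-grid_bound..grid_bound}" by (auto simp: abs_le_iff)
    thus "p \<in> PiE {1..l} (\<lambda>_. {-grid_bound..grid_bound}) \<times> UNIV"
      unfolding r(2) label_def by (simp add: restrict_PiE_iff)
  qed
  have "t = card {1..t}" by simp
  also have "\<dots> \<le> card (PiE {1..l} (\<lambda>_. {-grid_bound..grid_bound}) \<times> (UNIV :: bool set))"
    by (rule card_inj_on_le[OF inj range]) (intro finite_cartesian_product finite_PiE; simp)
  also have "\<dots> \<le> 2 ^ (22 * l^2)" by (rule card_labels_le)
  finally show ?thesis .
qed

end

theorem lemma6p5:
  fixes G :: "('g, 'b) monoid_scheme" and act :: "'g \<Rightarrow> 'x \<Rightarrow> 'x" and X :: "'x set"
    and l :: nat and \<phi> :: "'c::{finite, ab_group_add} pt \<Rightarrow> 'g"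
    and D Zr a :: "nat \<Rightarrow> nat" and \<H> :: "'g set set"
    and \<epsilon> q :: real and E :: "'x rel" and x :: 'x and i t :: nat and y :: "nat \<Rightarrow> 'x"
  assumes "group G" and "countable (carrier G)" and "group_action G X act"
    and "chart G l \<phi> D Zr \<H>"
    and "0 < \<epsilon>" and "\<epsilon> < 1/16" and "6 * \<epsilon> < q" and "q < 1/2"
    and "equiv X E"
    and "sub_rectangular G act X l \<phi> D Zr \<H> a \<epsilon> E"
    and "x \<in> XH G act X \<H>" and "i \<in> {1..l}"
    and "\<forall>r\<in>{1..t}. y r \<in> boundary G act X l \<phi> \<H> E (rscale q (centered a)) i
                    \<inter> act_img act \<phi> (rset l (rscale (2 ^ (17 * l)) (centered a))) x"
    and "\<forall>r\<in>{1..t}. \<forall>s\<in>{1..t}. r \<noteq> s \<longrightarrow>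
           act_img act \<phi> (psum (rset l (rscale (2 ^ (19 * l)) (rdrop i (centered a))))
                                 (rset l (rscale (5 * q) (centered a)))) (y r)
         \<inter> act_img act \<phi> (psum (rset l (rscale (2 ^ (19 * l)) (rdrop i (centered a))))
                                 (rset l (rscale (5 * q) (centered a)))) (y s) = {}"
  shows "t \<le> 2 ^ (22 * l^2)"
proof -
  have "boundary_setting G act X l \<phi> D Zr \<H> \<epsilon> q i"
    using assms(3-8,12) by (intro boundary_setting.intro chart_action.intro boundary_setting_axioms.intro)
  then interpret boundary_setting G act X l \<phi> D Zr \<H> a \<epsilon> q i .
  show ?thesis using boundary_points_bound assms(10,11,13,14) by blast
qed

end
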